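(* Let $n,m>3$ be integers and let $\psi$ be an automorphism of $\mathcal{CSR}(m,n)$. Then there are $m$ permutations $\psi_1,\dots,\psi_m$ of $\mathbb{Z}_n$ and a permutation $\sigma$ of $[m]$ such that $\psi\big(\sum_i x_i e_i\big)=\sum_i \psi_i(x_i)e_{\sigma(i)}$ for every vertex $\sum_i x_ie_i$ of $\mathcal{CSR}(m,n)$.
   Context: For positive integers $m,n$, the cyclic simplicial rook graph $\mathcal{CSR}(m,n)$ is the graph whose vertices are the vectors $(a_1,\dots,a_m)\in\mathbb{Z}_n^m$ with $a_1+\cdots+a_m\equiv 0 \pmod n$, two vertices being adjacent if and only if their vectors differ in exactly two coordinates. $[m]=\{1,\dots,m\}$ and $e_i\in\mathbb{Z}_n^m$ is the vector with $1$ in coordinate $i$ and $0$ elsewhere. *)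

theory Defs
  imports Main
begin

text \<open>Vertices of CSR(m,n): vectors indexed by coordinates 0..m-1 (standing for [m]),
  entries in {0..n-1} (standing for Z_n), extended by 0 outside the index range,
  with coordinate sum congruent to 0 mod n.\<close>
definition csr_vertices :: "nat \<Rightarrow> nat \<Rightarrow> (nat \<Rightarrow> nat) set" where
  "csr_vertices m n = {x. (\<forall>i<m. x i < n) \<and> (\<forall>i\<ge>m. x i = 0) \<and> (\<Sum>i<m. x i) mod n = 0}"

definition csr_adj :: "nat \<Rightarrow> (nat \<Rightarrow> nat) \<Rightarrow> (nat \<Rightarrow> nat) \<Rightarrow> bool" where
  "csr_adj m x y \<longleftrightarrow> card {i. i < m \<and> x i \<noteq> y i} = 2"

definition csr_automorphism :: "nat \<Rightarrow> nat \<Rightarrow> ((nat \<Rightarrow> nat) \<Rightarrow> (nat \<Rightarrow> nat)) \<Rightarrow> bool" where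
  "csr_automorphism m n \<psi> \<longleftrightarrow>
     bij_betw \<psi> (csr_vertices m n) (csr_vertices m n) \<and>
     (\<forall>x\<in>csr_vertices m n. \<forall>y\<in>csr_vertices m n. csr_adj m (\<psi> x) (\<psi> y) \<longleftrightarrow> csr_adj m x y)"

end

(* Every edge x -- y of CSR(m, n) changes a pair D(x, y) of coordinates; two edges at x change
   the same pair iff their far ends lie on a common line through x.  An automorphism preserves
   this: a triangle x y z on a line admits a second triangle at x whose hull (common neighbours
   plus its own vertices) is at distance at least two from that of x y z, while the hull of a
   star triangle (pairs {a, b}, {a, c}) comes close to every triangle at x.  It also preserves
   whether three pairwise different pairs at x share a coordinate: only then can every neighbour
   in the first direction be completed to a triangle in the three directions, as the line sums
   would otherwise force n to divide 2.  Hence each coordinate i determines a coordinate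
   sigma(i) with D(psi x, psi y) = sigma(D(x, y)) for all edges at x; comparing the two ends of
   an edge shows that sigma does not depend on x.  Finally, walking from x to y along edges that
   only change coordinates in which x and y differ, psi x and psi y agree at sigma(i) whenever
   x and y agree at i. *)

theory Submission
  imports Defs "HOL-Number_Theory.Cong"
begin

lemma sum_add_eq_outside:
  fixes f g :: "'a \<Rightarrow> 'b::comm_monoid_add"
  assumes "finite A" "B \<subseteq> A" "\<And>k. k \<in> A - B \<Longrightarrow> f k = g k"
  shows "sum f A + sum g B = sum g A + sum f B"
proof -
  have "sum f (A - B) = sum g (A - B)"
    using assms(3) by (rule sum.cong[OF refl])
  then show ?thesis
    using sum.subset_diff[OF assms(2,1), of f] sum.subset_diff[OF assms(2,1), of g]
    by (simp add: ac_simps)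
qed

lemma add_mod_neq:
  fixes b d n :: nat
  assumes "0 < d" "d < n"
  shows "(b + d) mod n \<noteq> b mod n"
proof
  assume "(b + d) mod n = b mod n"
  then have "[b + d = b + 0] (mod n)" by (simp add: cong_def)
  then have "n dvd d" by (simp only: cong_add_lcancel_nat cong_0_iff)
  then show False using assms by (simp add: nat_dvd_not_less)
qed

lemma exists_less_notin_set:
  assumes "length ks < m"
  obtains k :: nat where "k < m" "k \<notin> set ks"
proof -
  have "\<not> {..<m} \<subseteq> set ks"
  proof
    assume "{..<m} \<subseteq> set ks"
    then have "card {..<m} \<le> card (set ks)" by (intro card_mono) simp_all
    then show False using assms card_length[of ks] by simp
  qed
  then show ?thesis using that by blast
qed

lemma card_2_obtain_other:
  assumes "card S = 2" "c \<in> S"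
  obtains b where "S = {c, b}" "b \<noteq> c"
  using assms by (auto simp: card_2_iff doubleton_eq_iff)

lemma card_2_Int_unique:
  assumes "card A = 2" "card B = 2" "A \<noteq> B" "c \<in> A \<inter> B" "c' \<in> A \<inter> B"
  shows "c = c'"
proof (rule ccontr)
  assume "c \<noteq> c'"
  then have "A = {c, c'}" "B = {c, c'}"
    using assms by (auto simp: card_2_iff doubleton_eq_iff)
  then show False using assms(3) by simp
qed

locale csr =
  fixes m n :: nat
begin

abbreviation V where "V \<equiv> csr_vertices m n"
abbreviation adj where "adj \<equiv> csr_adj m"
abbreviation aut where "aut \<equiv> csr_automorphism m n"

definition diff_coords :: "(nat \<Rightarrow> nat) \<Rightarrow> (nat \<Rightarrow> nat) \<Rightarrow> nat set" where
  "diff_coords x y = {i. i < m \<and> x i \<noteq> y i}"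

lemma diff_coords_iff: "i \<in> diff_coords x y \<longleftrightarrow> i < m \<and> x i \<noteq> y i"
  by (simp add: diff_coords_def)

lemma finite_diff_coords [simp]: "finite (diff_coords x y)"
  by (simp add: diff_coords_def)

lemma diff_coords_commute: "diff_coords x y = diff_coords y x"
  by (auto simp: diff_coords_def)

lemma diff_coords_subset_Un: "diff_coords y z \<subseteq> diff_coords x y \<union> diff_coords x z"
  by (auto simp: diff_coords_def)

lemma diff_coords_Diff_subset: "diff_coords x y - diff_coords x z \<subseteq> diff_coords y z"
  by (auto simp: diff_coords_def)

lemma diff_coords_subsetI:
  "(\<And>k. k < m \<Longrightarrow> k \<notin> S \<Longrightarrow> x k = y k) \<Longrightarrow> diff_coords x y \<subseteq> S"
  by (auto simp: diff_coords_def)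

lemma csr_adj_iff: "adj x y \<longleftrightarrow> card (diff_coords x y) = 2"
  by (simp add: csr_adj_def diff_coords_def)

lemma csr_adj_commute: "adj x y \<longleftrightarrow> adj y x"
  by (simp add: csr_adj_iff diff_coords_commute)

lemma csr_adj_obtain_pair:
  assumes "adj x y"
  obtains i j where "diff_coords x y = {i, j}" "i \<noteq> j"
  using assms by (auto simp: csr_adj_iff card_2_iff)

lemma csr_adj_neq: "adj x y \<Longrightarrow> x \<noteq> y"
  by (auto simp: csr_adj_iff diff_coords_def)

lemma csr_vertex_sum_mod_iff:
  assumes "x \<in> V" "B \<subseteq> {..<m}" "\<And>k. k < m \<Longrightarrow> k \<notin> B \<Longrightarrow> p k = x k"
  shows "(\<Sum>k<m. p k) mod n = 0 \<longleftrightarrow> (\<Sum>k\<in>B. p k) mod n = (\<Sum>k\<in>B. x k) mod n"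
proof -
  have "(\<Sum>k<m. p k) + (\<Sum>k\<in>B. x k) = (\<Sum>k<m. x k) + (\<Sum>k\<in>B. p k)"
    using assms(2,3) by (intro sum_add_eq_outside) auto
  moreover have "[(\<Sum>k<m. x k) = 0] (mod n)"
    using assms(1) by (simp add: csr_vertices_def cong_def)
  ultimately have sum_cong: "[(\<Sum>k<m. p k) + (\<Sum>k\<in>B. x k) = (\<Sum>k\<in>B. p k)] (mod n)"
    using cong_add[OF _ cong_refl, of "\<Sum>k<m. x k" 0 n "\<Sum>k\<in>B. p k"] by simp
  have "[(\<Sum>k<m. p k) = 0] (mod n) \<longleftrightarrow>
      [(\<Sum>k<m. p k) + (\<Sum>k\<in>B. x k) = 0 + (\<Sum>k\<in>B. x k)] (mod n)"
    by (simp only: cong_add_rcancel_nat)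
  also have "\<dots> \<longleftrightarrow> [(\<Sum>k\<in>B. p k) = (\<Sum>k\<in>B. x k)] (mod n)"
  proof
    assume "[(\<Sum>k<m. p k) + (\<Sum>k\<in>B. x k) = 0 + (\<Sum>k\<in>B. x k)] (mod n)"
    then show "[(\<Sum>k\<in>B. p k) = (\<Sum>k\<in>B. x k)] (mod n)"
      using cong_trans[OF cong_sym[OF sum_cong]] by simp
  next
    assume "[(\<Sum>k\<in>B. p k) = (\<Sum>k\<in>B. x k)] (mod n)"
    then show "[(\<Sum>k<m. p k) + (\<Sum>k\<in>B. x k) = 0 + (\<Sum>k\<in>B. x k)] (mod n)"
      using cong_trans[OF sum_cong] by simp
  qed
  finally show ?thesis by (simp add: cong_def)
qed

lemma csr_vertex_eqI:
  assumes "x \<in> V" "y \<in> V" "diff_coords x y \<subseteq> {i}"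
  shows "x = y"
proof
  fix k
  have agree: "y k = x k" if "k < m" "k \<noteq> i" for k
    using assms(3) that by (auto simp: diff_coords_def)
  show "x k = y k"
  proof (cases "k < m")
    case True
    show ?thesis
    proof (cases "k = i")
      case True
      have "y i mod n = x i mod n"
        using csr_vertex_sum_mod_iff[OF assms(1), of "{i}" y] assms(2) agree \<open>k < m\<close> True
        by (auto simp: csr_vertices_def)
      then show ?thesis using assms(1,2) \<open>k < m\<close> True by (simp add: csr_vertices_def)
    qed (use agree \<open>k < m\<close> in auto)
  qed (use assms(1,2) in \<open>simp add: csr_vertices_def\<close>)
qed

lemma csr_adj_if_diff_coords_subset:
  assumes "p \<in> V" "q \<in> V" "p \<noteq> q" "diff_coords p q \<subseteq> {i, j}"
  shows "adj p q" "diff_coords p q = {i, j}"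
proof -
  have "\<not> diff_coords p q \<subseteq> {k}" for k
    using csr_vertex_eqI[OF assms(1,2)] assms(3) by blast
  then have eq: "diff_coords p q = {i, j}" and "i \<noteq> j"
    using assms(4) by blast+
  show "diff_coords p q = {i, j}" by (fact eq)
  show "adj p q" using eq \<open>i \<noteq> j\<close> by (simp add: csr_adj_iff)
qed

lemma line_points_eq_or_adj:
  assumes "p \<in> V" "q \<in> V" "diff_coords x p \<subseteq> {i, j}" "diff_coords x q \<subseteq> {i, j}"
  shows "p = q \<or> adj p q"
  using csr_adj_if_diff_coords_subset[OF assms(1,2)] diff_coords_subset_Un[of p q x] assms(3,4)
  by blast

lemma same_direction_eq_or_adj:
  assumes "y \<in> V" "z \<in> V" "adj x y" "diff_coords x y = diff_coords x z"
  shows "y = z \<or> adj y z"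
proof -
  obtain i j where "diff_coords x y = {i, j}" using assms(3) by (rule csr_adj_obtain_pair)
  then show ?thesis using line_points_eq_or_adj[OF assms(1,2), of x i j] assms(4) by simp
qed

lemma line_points_eqI:
  assumes "p \<in> V" "q \<in> V" "diff_coords x p \<subseteq> {i, j}" "diff_coords x q \<subseteq> {i, j}" "p i = q i"
  shows "p = q"
proof -
  have "diff_coords p q \<subseteq> {j}"
    using diff_coords_subset_Un[of p q x] assms(3-5) by (auto simp: diff_coords_def)
  then show ?thesis using csr_vertex_eqI[OF assms(1,2)] by blast
qed

lemma star_points_adj:
  assumes "p \<in> V" "q \<in> V" "diff_coords x p = {a, b}" "diff_coords x q = {a, c}"
    "distinct [a, b, c]" "p a = q a"
  shows "adj p q"
proof -
  have "b \<in> diff_coords x p" "b \<notin> diff_coords x q"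
    using assms(3-5) by auto
  then have "p b \<noteq> q b" by (auto simp: diff_coords_iff)
  then have "p \<noteq> q" by auto
  moreover have "diff_coords p q \<subseteq> {b, c}"
    using diff_coords_subset_Un[of p q x] assms(3,4,6) by (auto simp: diff_coords_def)
  ultimately show ?thesis using csr_adj_if_diff_coords_subset[OF assms(1,2)] by blast
qed

lemma triangle_star:
  assumes "adj x y" "adj x z" "adj y z" "diff_coords x y \<noteq> diff_coords x z"
  obtains a b c where "diff_coords x y = {a, b}" "diff_coords x z = {a, c}" "distinct [a, b, c]"
    "y a = z a" "diff_coords y z = {b, c}"
proof -
  let ?A = "diff_coords x y" and ?B = "diff_coords x z" and ?C = "diff_coords y z"
  have card: "card ?A = 2" "card ?B = 2" "card ?C = 2"
    using assms(1-3) by (simp_all add: csr_adj_iff)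
  have "?A \<inter> ?B \<noteq> {}"
  proof
    assume disj: "?A \<inter> ?B = {}"
    then have "?A \<union> ?B \<subseteq> ?C"
      using diff_coords_Diff_subset[of x y z] diff_coords_Diff_subset[of x z y]
      by (auto simp: diff_coords_commute[of z y])
    then have "card (?A \<union> ?B) \<le> card ?C" by (intro card_mono) simp_all
    then show False using card disj by (simp add: card_Un_disjoint)
  qed
  then obtain a where a: "a \<in> ?A" "a \<in> ?B" by blast
  obtain b where b: "?A = {a, b}" "b \<noteq> a" using card_2_obtain_other[OF card(1) a(1)] .
  obtain c where c: "?B = {a, c}" "c \<noteq> a" using card_2_obtain_other[OF card(2) a(2)] .
  have "b \<noteq> c" using assms(4) b(1) c(1) by auto
  have "{b, c} \<subseteq> ?C"
    using diff_coords_Diff_subset[of x y z] diff_coords_Diff_subset[of x z y] b c \<open>b \<noteq> c\<close>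
    by (auto simp: diff_coords_commute[of z y])
  then have C: "?C = {b, c}"
    using card(3) \<open>b \<noteq> c\<close> by (intro card_subset_eq[symmetric]) simp_all
  have "y a = z a"
    using C a(1) b(2) c(2) by (auto simp: diff_coords_iff)
  then show ?thesis using that b c \<open>b \<noteq> c\<close> C by simp
qed

lemma triangle_diff_coords:
  assumes "adj x y" "adj x z" "adj y z" "diff_coords x y \<noteq> diff_coords x z"
  shows "diff_coords y z =
    (diff_coords x y - diff_coords x z) \<union> (diff_coords x z - diff_coords x y)"
  by (rule triangle_star[OF assms]) auto

text \<open>The summand \<open>n\<close> keeps the truncated subtraction exact, as \<open>v < n\<close> wherever
  \<open>line_point\<close> is used.\<close>

definition line_point :: "(nat \<Rightarrow> nat) \<Rightarrow> nat \<Rightarrow> nat \<Rightarrow> nat \<Rightarrow> nat \<Rightarrow> nat" where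
  "line_point x i j v = x(i := v, j := (x i + x j + n - v) mod n)"

lemma line_point_same [simp]: "i \<noteq> j \<Longrightarrow> line_point x i j v i = v"
  by (simp add: line_point_def)

lemma line_point_other [simp]: "k \<noteq> i \<Longrightarrow> k \<noteq> j \<Longrightarrow> line_point x i j v k = x k"
  by (simp add: line_point_def)

lemma diff_coords_line_point: "diff_coords x (line_point x i j v) \<subseteq> {i, j}"
  by (rule diff_coords_subsetI) simp

lemma line_point_in_V:
  assumes "x \<in> V" "i < m" "j < m" "i \<noteq> j" "v < n"
  shows "line_point x i j v \<in> V"
proof -
  let ?p = "line_point x i j v" and ?w = "(x i + x j + n - v) mod n"
  have "(v + ?w) mod n = (x i + x j + n) mod n"
    using assms(5) by (simp add: mod_add_right_eq)
  then have "(?p i + ?p j) mod n = (x i + x j) mod n"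
    using assms(4) by (simp add: line_point_def)
  then have "(\<Sum>k<m. ?p k) mod n = 0"
    using csr_vertex_sum_mod_iff[OF assms(1), of "{i, j}" ?p] assms(2-4) by simp
  moreover have "?p k < n" if "k < m" for k
    using assms(1,5) that by (auto simp: line_point_def csr_vertices_def)
  moreover have "?p k = 0" if "m \<le> k" for k
    using assms(1-3) that by (auto simp: line_point_def csr_vertices_def)
  ultimately show ?thesis by (simp add: csr_vertices_def)
qed

lemma line_point_adj:
  assumes "x \<in> V" "i < m" "j < m" "i \<noteq> j" "v < n" "v \<noteq> x i"
  shows "adj x (line_point x i j v)" "diff_coords x (line_point x i j v) = {i, j}"
proof -
  have "x \<noteq> line_point x i j v" using assms(4,6) line_point_same by metis
  then show "adj x (line_point x i j v)" "diff_coords x (line_point x i j v) = {i, j}"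
    using csr_adj_if_diff_coords_subset[OF assms(1) line_point_in_V[OF assms(1-5)] _
        diff_coords_line_point]
    by auto
qed

lemma line_sum_mod:
  assumes "x \<in> V" "p \<in> V" "i < m" "j < m" "i \<noteq> j" "diff_coords x p \<subseteq> {i, j}"
  shows "[p i + p j = x i + x j] (mod n)"
proof -
  have "p k = x k" if "k < m" "k \<notin> {i, j}" for k
    using assms(6) that by (auto simp: diff_coords_def)
  then show ?thesis
    using csr_vertex_sum_mod_iff[OF assms(1), of "{i, j}" p] assms(2-5)
    by (simp add: csr_vertices_def cong_def)
qed

lemma exists_adj_direction:
  assumes "1 < n" "x \<in> V" "i < m" "j < m" "i \<noteq> j"
  obtains y where "y \<in> V" "adj x y" "diff_coords x y = {i, j}"
proof
  let ?y = "line_point x i j ((x i + 1) mod n)"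
  have "x i < n" using assms(2,3) by (simp add: csr_vertices_def)
  then have "(x i + 1) mod n \<noteq> x i" using add_mod_neq[of 1 n "x i"] assms(1) by simp
  then show "?y \<in> V" "adj x ?y" "diff_coords x ?y = {i, j}"
    using line_point_in_V line_point_adj assms(1-5) by simp_all
qed

lemma exists_vertex_with_coord:
  assumes "2 \<le> m" "i < m" "v < n"
  obtains x where "x \<in> V" "x i = v"
proof
  let ?j = "if i = 0 then 1 else 0"
  have "(\<lambda>_. 0) \<in> V" using assms(3) by (simp add: csr_vertices_def)
  then show "line_point (\<lambda>_. 0) i ?j v \<in> V"
    using line_point_in_V assms by simp
  show "line_point (\<lambda>_. 0) i ?j v i = v" by simp
qed

lemma csr_vertex_path_induct:
  assumes "x \<in> V" "y \<in> V" "P x"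
    and step: "\<And>u v. u \<in> V \<Longrightarrow> v \<in> V \<Longrightarrow> adj u v \<Longrightarrow> diff_coords u v \<subseteq> diff_coords x y \<Longrightarrow>
      P u \<Longrightarrow> P v"
  shows "P y"
  using assms
proof (induction "card (diff_coords x y)" arbitrary: x rule: less_induct)
  case less
  show ?case
  proof (cases "x = y")
    case True
    then show ?thesis using less.prems(3) by simp
  next
    case False
    have "\<not> diff_coords x y \<subseteq> {j}" for j
      using csr_vertex_eqI[OF less.prems(1,2)] False by blast
    then obtain j k where jk: "j \<in> diff_coords x y" "k \<in> diff_coords x y" "j \<noteq> k"
      by (metis insertI1 singletonI subsetI)
    then have "j < m" "k < m" "y j \<noteq> x j" by (auto simp: diff_coords_iff)
    moreover have "y j < n" using less.prems(2) \<open>j < m\<close> by (simp add: csr_vertices_def)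
    moreover define x' where "x' = line_point x j k (y j)"
    ultimately have x': "x' \<in> V" "adj x x'" "diff_coords x x' = {j, k}" "x' j = y j"
      using line_point_in_V line_point_adj less.prems(1) jk(3) by auto
    have "P x'" using less.prems(4)[OF less.prems(1) x'(1,2)] x'(3) jk less.prems(3) by simp
    have "diff_coords x' y \<subseteq> diff_coords x y"
      using diff_coords_subset_Un[of x' y x] x'(3) jk(1,2) by auto
    moreover have "j \<notin> diff_coords x' y" using x'(4) by (simp add: diff_coords_iff)
    ultimately have "diff_coords x' y \<subset> diff_coords x y" using jk(1) by blast
    then have "card (diff_coords x' y) < card (diff_coords x y)" by (simp add: psubset_card_mono)
    then show ?thesis
      using less.hyps x'(1) less.prems(2,4) \<open>P x'\<close> \<open>diff_coords x' y \<subseteq> diff_coords x y\<close>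
      by (meson order_trans)
  qed
qed

lemma diff_coords_disjoint_card:
  assumes "diff_coords x p \<inter> diff_coords x q = {}"
  shows "card (diff_coords x p) + card (diff_coords x q) \<le> card (diff_coords p q)"
proof -
  have "diff_coords x p \<union> diff_coords x q \<subseteq> diff_coords p q"
    using diff_coords_Diff_subset[of x p q] diff_coords_Diff_subset[of x q p] assms
    by (auto simp: diff_coords_commute[of q p])
  then have "card (diff_coords x p \<union> diff_coords x q) \<le> card (diff_coords p q)"
    by (intro card_mono) simp_all
  then show ?thesis using assms by (simp add: card_Un_disjoint)
qed

section \<open>Lines versus stars\<close>

definition triangle_hull :: "(nat \<Rightarrow> nat) \<Rightarrow> (nat \<Rightarrow> nat) \<Rightarrow> (nat \<Rightarrow> nat) \<Rightarrow> (nat \<Rightarrow> nat) set" where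
  "triangle_hull x y z = {w \<in> V. w = y \<or> w = z \<or> (adj w x \<and> adj w y \<and> adj w z)}"

text \<open>The hull of a triangle \<open>x y z\<close> along a line is the rest of that line, while the hull of a
  star triangle with centre coordinate \<open>a\<close> meets every line through \<open>x\<close> that changes \<open>a\<close> and
  comes within distance one of every other triangle at \<open>x\<close>.\<close>

definition has_remote_triangle :: "(nat \<Rightarrow> nat) \<Rightarrow> (nat \<Rightarrow> nat) \<Rightarrow> (nat \<Rightarrow> nat) \<Rightarrow> bool" where
  "has_remote_triangle x y z \<longleftrightarrow> (\<exists>u\<in>V. \<exists>v\<in>V. adj x u \<and> adj x v \<and> adj u v \<and>
     (\<forall>p\<in>triangle_hull x y z. \<forall>q\<in>triangle_hull x u v. p \<noteq> q \<and> \<not> adj p q))"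

lemma triangle_hull_subset: "triangle_hull x y z \<subseteq> V"
  by (auto simp: triangle_hull_def)

lemma triangle_hull_adj:
  assumes "adj x y" "adj x z" "w \<in> triangle_hull x y z"
  shows "adj x w"
  using assms by (auto simp: triangle_hull_def csr_adj_commute)

lemma triangle_hull_collinear:
  assumes "y \<in> V" "z \<in> V" "adj x y" "adj x z" "adj y z"
    "diff_coords x y = diff_coords x z" "w \<in> triangle_hull x y z"
  shows "diff_coords x w = diff_coords x y"
proof (rule ccontr)
  assume ne: "diff_coords x w \<noteq> diff_coords x y"
  then have "w \<noteq> y" "w \<noteq> z" using assms(6) by auto
  then have adj_w: "adj x w" "adj y w" "adj z w"
    using assms(7) unfolding triangle_hull_def by (auto simp: csr_adj_commute)
  obtain a b c where abc: "diff_coords x y = {a, b}" "diff_coords x w = {a, c}"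
    "distinct [a, b, c]" "y a = w a" "diff_coords y w = {b, c}"
    by (rule triangle_star[OF assms(3) adj_w(1,2) ne[symmetric]])
  have "diff_coords x z \<noteq> diff_coords x w" using ne assms(6) by simp
  then obtain a' b' c' where "diff_coords x z = {a', b'}" "diff_coords x w = {a', c'}"
    "distinct [a', b', c']" "z a' = w a'" "diff_coords z w = {b', c'}"
    by (rule triangle_star[OF assms(4) adj_w(1,3)])
  then have "a' = a" "z a = y a" using abc assms(6) by auto
  then have "y = z"
    using line_points_eqI[OF assms(1,2), of x a b] abc(1) assms(6) by simp
  then show False using csr_adj_neq[OF assms(5)] by simp
qed

lemma collinear_has_remote_triangle:
  assumes "4 \<le> m" "3 \<le> n" "x \<in> V" "y \<in> V" "z \<in> V" "adj x y" "adj x z" "adj y z"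
    "diff_coords x y = diff_coords x z"
  shows "has_remote_triangle x y z"
proof -
  obtain i j where ij: "diff_coords x y = {i, j}" "i \<noteq> j"
    using assms(6) by (rule csr_adj_obtain_pair)
  obtain k where k: "k < m" "k \<notin> {i, j}"
    using exists_less_notin_set[of "[i, j]" m] assms(1) by auto
  obtain l where l: "l < m" "l \<notin> {i, j, k}"
    using exists_less_notin_set[of "[i, j, k]" m] assms(1) by auto
  have "x k < n" using assms(3) k(1) by (simp add: csr_vertices_def)
  then have shifts: "(x k + 1) mod n \<noteq> x k" "(x k + 2) mod n \<noteq> x k"
    "(x k + 1) mod n \<noteq> (x k + 2) mod n"
    using add_mod_neq[of 1 n "x k"] add_mod_neq[of 2 n "x k"] add_mod_neq[of 1 n "x k + 1"] assms(2)
    by simp_all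
  define u where "u = line_point x k l ((x k + 1) mod n)"
  define v where "v = line_point x k l ((x k + 2) mod n)"
  have line: "k < m" "l < m" "k \<noteq> l" using k l by auto
  have u: "u \<in> V" "adj x u" "diff_coords x u = {k, l}"
    unfolding u_def using line_point_in_V line_point_adj assms(2,3) line shifts(1) by simp_all
  have v: "v \<in> V" "adj x v" "diff_coords x v = {k, l}"
    unfolding v_def using line_point_in_V line_point_adj assms(2,3) line shifts(2) by simp_all
  have "u \<noteq> v" using shifts(3) line(3) unfolding u_def v_def by (metis line_point_same)
  then have "adj u v" using line_points_eq_or_adj[OF u(1) v(1)] u(3) v(3) by blast
  have "p \<noteq> q \<and> \<not> adj p q" if p: "p \<in> triangle_hull x y z" and q: "q \<in> triangle_hull x u v" for p q
  proof -
    have "diff_coords x p = {i, j}" "diff_coords x q = {k, l}"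
      using triangle_hull_collinear[OF assms(4,5,6,7,8,9) p]
        triangle_hull_collinear[OF u(1) v(1) u(2) v(2) \<open>adj u v\<close> _ q] ij u(3) v(3) by simp_all
    then have "4 \<le> card (diff_coords p q)"
      using diff_coords_disjoint_card[of x p q] ij(2) line(3) k(2) l(2) by simp
    moreover have "diff_coords q q = {}" by (simp add: diff_coords_def)
    ultimately show ?thesis by (auto simp: csr_adj_iff)
  qed
  then show ?thesis unfolding has_remote_triangle_def using u v \<open>adj u v\<close> by blast
qed

lemma triangle_hull_line:
  assumes "x \<in> V" "u \<in> V" "v \<in> V" "adj x u" "diff_coords x u = diff_coords x v"
    "q \<in> V" "q \<noteq> x" "diff_coords x q \<subseteq> diff_coords x u"
  shows "q \<in> triangle_hull x u v"
proof -
  obtain k l where kl: "diff_coords x u = {k, l}" using assms(4) by (rule csr_adj_obtain_pair)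
  have "adj q x"
    using csr_adj_if_diff_coords_subset[OF assms(6,1,7), of k l] assms(8) kl
    by (simp add: diff_coords_commute)
  moreover have "q = u \<or> adj q u" "q = v \<or> adj q v"
    using line_points_eq_or_adj[OF assms(6), of _ x k l] assms(2,3,5,8) kl by auto
  ultimately show ?thesis using assms(6) by (auto simp: triangle_hull_def)
qed

lemma triangle_hull_star:
  assumes "x \<in> V" "y \<in> V" "z \<in> V" "diff_coords x y = {a, b}" "diff_coords x z = {a, c}"
    "distinct [a, b, c]" "y a = z a" "l < m" "l \<noteq> a"
  shows "\<exists>s\<in>triangle_hull x y z. diff_coords x s = {a, l}"
proof
  let ?s = "line_point x a l (y a)"
  have "a \<in> diff_coords x y" using assms(4) by simp
  then have a: "a < m" "y a \<noteq> x a" by (auto simp: diff_coords_iff)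
  then have "y a < n" using assms(2) by (simp add: csr_vertices_def)
  then have s: "?s \<in> V" "adj x ?s" "diff_coords x ?s = {a, l}"
    using line_point_in_V line_point_adj assms(1,8,9) a by simp_all
  show "diff_coords x ?s = {a, l}" by (fact s(3))
  have sa: "?s a = y a" using assms(9) by simp
  consider "l = b" | "l = c" | "l \<noteq> b" "l \<noteq> c" by blast
  then show "?s \<in> triangle_hull x y z"
  proof cases
    case 1
    then have "?s = y" using line_points_eqI[OF s(1) assms(2), of x a b] s(3) assms(4) sa by simp
    then show ?thesis using s(1) by (simp add: triangle_hull_def)
  next
    case 2
    then have "?s = z"
      using line_points_eqI[OF s(1) assms(3), of x a c] s(3) assms(5,7) sa by simp
    then show ?thesis using s(1) by (simp add: triangle_hull_def)
  next
    case 3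
    then have "adj ?s y" "adj ?s z"
      using star_points_adj[OF s(1) assms(2) s(3) assms(4)]
        star_points_adj[OF s(1) assms(3) s(3) assms(5)] assms(6,7,9) sa by auto
    then show ?thesis using s(1,2) by (auto simp: triangle_hull_def csr_adj_commute)
  qed
qed

lemma star_hull_near_direction:
  assumes "x \<in> V" "y \<in> V" "z \<in> V" "diff_coords x y = {a, b}" "diff_coords x z = {a, c}"
    "distinct [a, b, c]" "y a = z a" "q \<in> V" "adj x q" "a \<in> diff_coords x q"
  shows "\<exists>s\<in>triangle_hull x y z. s = q \<or> adj s q"
proof -
  have "card (diff_coords x q) = 2" using assms(9) by (simp add: csr_adj_iff)
  then obtain l where l: "diff_coords x q = {a, l}" "l \<noteq> a"
    by (rule card_2_obtain_other[OF _ assms(10)])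
  then have "l \<in> diff_coords x q" by simp
  then have "l < m" by (simp add: diff_coords_iff)
  then obtain s where s: "s \<in> triangle_hull x y z" "diff_coords x s = {a, l}"
    using triangle_hull_star[OF assms(1-7) _ l(2)] by blast
  have "s \<in> V" using s(1) by (simp add: triangle_hull_def)
  then have "s = q \<or> adj s q" using line_points_eq_or_adj[of s q x a l] s(2) l(1) assms(8) by simp
  then show ?thesis using s(1) by blast
qed

lemma star_hull_near_line:
  assumes "x \<in> V" "y \<in> V" "z \<in> V" "diff_coords x y = {a, b}" "diff_coords x z = {a, c}"
    "distinct [a, b, c]" "y a = z a" "u \<in> V" "v \<in> V" "adj x u"
    "diff_coords x u = diff_coords x v" "a \<notin> diff_coords x u"
  shows "\<exists>s\<in>triangle_hull x y z. \<exists>q\<in>triangle_hull x u v. adj s q"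
proof -
  obtain k l where kl: "diff_coords x u = {k, l}" "k \<noteq> l"
    using assms(10) by (rule csr_adj_obtain_pair)
  have "k \<in> diff_coords x u" "l \<in> diff_coords x u" using kl(1) by simp_all
  then have "k < m" "l < m" by (simp_all add: diff_coords_iff)
  have "a \<noteq> k" "a \<noteq> l" using kl(1) assms(12) by auto
  then obtain s where s: "s \<in> triangle_hull x y z" "diff_coords x s = {a, k}"
    using triangle_hull_star[OF assms(1-7) \<open>k < m\<close>] by blast
  have "s \<in> V" using s(1) by (simp add: triangle_hull_def)
  have "k \<in> diff_coords x s" "a \<in> diff_coords x s" using s(2) by simp_all
  then have sk: "s k < n" "s k \<noteq> x k" and "s a \<noteq> x a"
    using \<open>s \<in> V\<close> by (auto simp: diff_coords_iff csr_vertices_def)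
  let ?q = "line_point x k l (s k)"
  have q: "?q \<in> V" "adj x ?q" "diff_coords x ?q = {k, l}"
    using line_point_in_V line_point_adj assms(1) \<open>k < m\<close> \<open>l < m\<close> kl(2) sk by simp_all
  have "?q \<in> triangle_hull x u v"
    using triangle_hull_line[OF assms(1,8,9,10,11) q(1)] csr_adj_neq[OF q(2)] q(3) kl(1) by simp
  moreover have "adj s ?q"
  proof (rule csr_adj_if_diff_coords_subset[OF \<open>s \<in> V\<close> q(1)])
    have "?q a = x a" using \<open>a \<noteq> k\<close> \<open>a \<noteq> l\<close> by simp
    then show "s \<noteq> ?q" using \<open>s a \<noteq> x a\<close> by metis
    have s_out: "s t = x t" if "t < m" "t \<notin> {a, k}" for t
    proof -
      have "t \<notin> diff_coords x s" using s(2) that(2) by simp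
      then show ?thesis using that(1) by (simp add: diff_coords_iff)
    qed
    show "diff_coords s ?q \<subseteq> {a, l}"
    proof (rule diff_coords_subsetI)
      fix t assume "t < m" "t \<notin> {a, l}"
      then show "s t = ?q t" using s_out[of t] kl(2) by (cases "t = k") simp_all
    qed
  qed
  ultimately show ?thesis using s(1) by blast
qed

lemma star_not_has_remote_triangle:
  assumes "x \<in> V" "y \<in> V" "z \<in> V" "adj x y" "adj x z" "adj y z"
    "diff_coords x y \<noteq> diff_coords x z"
  shows "\<not> has_remote_triangle x y z"
proof
  assume "has_remote_triangle x y z"
  then obtain u v where uv: "u \<in> V" "v \<in> V" "adj x u" "adj x v" "adj u v"
    and far: "\<forall>s\<in>triangle_hull x y z. \<forall>q\<in>triangle_hull x u v. s \<noteq> q \<and> \<not> adj s q"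
    unfolding has_remote_triangle_def by blast
  obtain a b c where abc: "diff_coords x y = {a, b}" "diff_coords x z = {a, c}"
    "distinct [a, b, c]" "y a = z a" "diff_coords y z = {b, c}"
    by (rule triangle_star[OF assms(4-7)])
  note near = star_hull_near_direction[OF assms(1-3) abc(1-4)]
  have "u \<in> triangle_hull x u v" using uv(1) by (simp add: triangle_hull_def)
  then have a_u: "a \<notin> diff_coords x u" using near[OF uv(1,3)] far by blast
  show False
  proof (cases "diff_coords x u = diff_coords x v")
    case True
    then show False
      using star_hull_near_line[OF assms(1-3) abc(1-4) uv(1-3) True a_u] far by blast
  next
    case False
    obtain a' b' c' where abc': "diff_coords x u = {a', b'}" "diff_coords x v = {a', c'}"
      "distinct [a', b', c']" "u a' = v a'" "diff_coords u v = {b', c'}"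
      by (rule triangle_star[OF uv(3-5) False])
    have "a \<in> diff_coords x y" using abc(1) by simp
    then have "a < m" by (simp add: diff_coords_iff)
    moreover have "a \<noteq> a'" using abc'(1) a_u by auto
    ultimately obtain t where t: "t \<in> triangle_hull x u v" "diff_coords x t = {a', a}"
      using triangle_hull_star[OF assms(1) uv(1,2) abc'(1-4), of a] by blast
    then have "t \<in> V" "adj x t"
      using triangle_hull_subset[of x u v] triangle_hull_adj[OF uv(3,4)] by auto
    then show False using near[of t] t far by auto
  qed
qed

lemma collinear_iff_has_remote_triangle:
  assumes "4 \<le> m" "3 \<le> n" "x \<in> V" "y \<in> V" "z \<in> V" "adj x y" "adj x z" "adj y z"
  shows "has_remote_triangle x y z \<longleftrightarrow> diff_coords x y = diff_coords x z"
  using collinear_has_remote_triangle[OF assms] star_not_has_remote_triangle[OF assms(3-)] by blast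

section \<open>Automorphisms preserve lines\<close>

lemma aut_bij: "aut \<psi> \<Longrightarrow> bij_betw \<psi> V V"
  unfolding csr_automorphism_def by (rule conjunct1)

lemma aut_in_V: assumes "aut \<psi>" "x \<in> V" shows "\<psi> x \<in> V"
  using bij_betw_apply[OF aut_bij[OF assms(1)] assms(2)] .

lemma aut_image: assumes "aut \<psi>" shows "\<psi> ` V = V"
  using bij_betw_imp_surj_on[OF aut_bij[OF assms]] .

lemma aut_adj_iff:
  assumes "aut \<psi>" "x \<in> V" "y \<in> V"
  shows "adj (\<psi> x) (\<psi> y) \<longleftrightarrow> adj x y"
  using assms unfolding csr_automorphism_def by blast

lemma aut_eq_iff:
  assumes "aut \<psi>" "x \<in> V" "y \<in> V"
  shows "\<psi> x = \<psi> y \<longleftrightarrow> x = y"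
  using inj_on_eq_iff[OF bij_betw_imp_inj_on[OF aut_bij[OF assms(1)]] assms(2,3)] .

lemma triangle_hull_aut:
  assumes "aut \<psi>" "x \<in> V" "y \<in> V" "z \<in> V"
  shows "triangle_hull (\<psi> x) (\<psi> y) (\<psi> z) = \<psi> ` triangle_hull x y z"
proof -
  have mem: "\<psi> w \<in> triangle_hull (\<psi> x) (\<psi> y) (\<psi> z) \<longleftrightarrow> w \<in> triangle_hull x y z"
    if "w \<in> V" for w
    using that assms by (simp add: triangle_hull_def aut_in_V aut_eq_iff aut_adj_iff)
  show ?thesis
  proof (intro equalityI subsetI)
    fix w' assume w': "w' \<in> triangle_hull (\<psi> x) (\<psi> y) (\<psi> z)"
    then have "w' \<in> \<psi> ` V" using triangle_hull_subset aut_image[OF assms(1)] by blast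
    then obtain w where "w \<in> V" "w' = \<psi> w" by blast
    then show "w' \<in> \<psi> ` triangle_hull x y z" using mem w' by blast
  next
    fix w' assume "w' \<in> \<psi> ` triangle_hull x y z"
    then obtain w where "w \<in> triangle_hull x y z" "w' = \<psi> w" by blast
    then show "w' \<in> triangle_hull (\<psi> x) (\<psi> y) (\<psi> z)" using mem triangle_hull_subset by blast
  qed
qed

lemma has_remote_triangle_aut:
  assumes "aut \<psi>" "x \<in> V" "y \<in> V" "z \<in> V"
  shows "has_remote_triangle (\<psi> x) (\<psi> y) (\<psi> z) \<longleftrightarrow> has_remote_triangle x y z"
proof -
  have apart: "(\<forall>p\<in>A. \<forall>q\<in>B. \<psi> p \<noteq> \<psi> q \<and> \<not> adj (\<psi> p) (\<psi> q)) \<longleftrightarrow>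
      (\<forall>p\<in>A. \<forall>q\<in>B. p \<noteq> q \<and> \<not> adj p q)"
    if "A \<subseteq> V" "B \<subseteq> V" for A B
  proof -
    have "\<psi> p \<noteq> \<psi> q \<and> \<not> adj (\<psi> p) (\<psi> q) \<longleftrightarrow> p \<noteq> q \<and> \<not> adj p q" if "p \<in> A" "q \<in> B" for p q
    proof -
      have "p \<in> V" "q \<in> V" using that \<open>A \<subseteq> V\<close> \<open>B \<subseteq> V\<close> by auto
      then show ?thesis by (simp add: aut_eq_iff[OF assms(1)] aut_adj_iff[OF assms(1)])
    qed
    then show ?thesis by auto
  qed
  have "has_remote_triangle (\<psi> x) (\<psi> y) (\<psi> z) \<longleftrightarrow>
      (\<exists>u\<in>\<psi> ` V. \<exists>v\<in>\<psi> ` V. adj (\<psi> x) u \<and> adj (\<psi> x) v \<and> adj u v \<and>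
        (\<forall>p\<in>triangle_hull (\<psi> x) (\<psi> y) (\<psi> z). \<forall>q\<in>triangle_hull (\<psi> x) u v. p \<noteq> q \<and> \<not> adj p q))"
    unfolding has_remote_triangle_def by (simp only: aut_image[OF assms(1)])
  also have "\<dots> \<longleftrightarrow> has_remote_triangle x y z"
    unfolding has_remote_triangle_def
    using assms
    by (simp add: aut_adj_iff triangle_hull_aut apart triangle_hull_subset cong: conj_cong)
  finally show ?thesis .
qed

lemma collinear_aut_iff:
  assumes "4 \<le> m" "3 \<le> n" "aut \<psi>" "x \<in> V" "y \<in> V" "z \<in> V" "adj x y" "adj x z"
  shows "diff_coords (\<psi> x) (\<psi> y) = diff_coords (\<psi> x) (\<psi> z) \<longleftrightarrow> diff_coords x y = diff_coords x z"
proof -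
  have image: "\<psi> x \<in> V" "\<psi> y \<in> V" "\<psi> z \<in> V" "adj (\<psi> x) (\<psi> y)" "adj (\<psi> x) (\<psi> z)"
    using assms(3-8) by (simp_all add: aut_in_V aut_adj_iff)
  show ?thesis
  proof (cases "adj y z")
    case True
    then have "adj (\<psi> y) (\<psi> z)" using assms(3,5,6) by (simp add: aut_adj_iff)
    then show ?thesis
      using collinear_iff_has_remote_triangle[OF assms(1,2) image] True
        collinear_iff_has_remote_triangle[OF assms(1,2,4-8) True]
        has_remote_triangle_aut[OF assms(3-6)]
      by simp
  next
    case False
    then have "\<not> adj (\<psi> y) (\<psi> z)" using assms(3,5,6) by (simp add: aut_adj_iff)
    then show ?thesis
      using False same_direction_eq_or_adj[OF assms(5,6,7)]
        same_direction_eq_or_adj[OF image(2,3,4)]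
        aut_eq_iff[OF assms(3,5,6)] by auto
  qed
qed

section \<open>Stars versus triangles of directions\<close>

text \<open>Three directions at \<open>x\<close> through a common coordinate \<open>a\<close> can be realised by a triangle
  through every neighbour in the first direction (a star centred at \<open>a\<close>).  Three directions
  \<open>{p, q}, {p, r}, {q, r}\<close> cannot: the line sums force \<open>2 (y p - x p) \<equiv> 0\<close>.  This tells the
  two kinds of triangles of the line graph of \<open>K\<^sub>m\<close> apart, which adjacency of directions alone
  does not do for \<open>m = 4\<close>.\<close>

definition extends_to_triangles ::
  "(nat \<Rightarrow> nat) \<Rightarrow> (nat \<Rightarrow> nat) \<Rightarrow> (nat \<Rightarrow> nat) \<Rightarrow> (nat \<Rightarrow> nat) \<Rightarrow> bool" where
  "extends_to_triangles x y z w \<longleftrightarrow> (\<forall>y'\<in>V. adj x y' \<and> diff_coords x y' = diff_coords x y \<longrightarrow>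
     (\<exists>z'\<in>V. \<exists>w'\<in>V. adj x z' \<and> diff_coords x z' = diff_coords x z \<and>
        adj x w' \<and> diff_coords x w' = diff_coords x w \<and> adj y' z' \<and> adj y' w' \<and> adj z' w'))"

lemma extends_to_triangles_if_common:
  assumes "x \<in> V" "diff_coords x y = {a, b}" "diff_coords x z = {a, c}" "diff_coords x w = {a, d}"
    "distinct [a, b, c, d]"
  shows "extends_to_triangles x y z w"
  unfolding extends_to_triangles_def
proof (intro ballI impI)
  fix y' assume y': "y' \<in> V" "adj x y' \<and> diff_coords x y' = diff_coords x y"
  then have y'_dir: "diff_coords x y' = {a, b}" using assms(2) by simp
  then have "a \<in> diff_coords x y'" "c \<in> diff_coords x z" "d \<in> diff_coords x w"
    using assms(3,4) by simp_all
  then have "a < m" "y' a \<noteq> x a" "c < m" "d < m"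
    by (simp_all add: diff_coords_iff)
  moreover have "y' a < n" using y'(1) \<open>a < m\<close> by (simp add: csr_vertices_def)
  moreover define z' where "z' = line_point x a c (y' a)"
  moreover define w' where "w' = line_point x a d (y' a)"
  ultimately have z': "z' \<in> V" "adj x z'" "diff_coords x z' = {a, c}" "z' a = y' a"
    and w': "w' \<in> V" "adj x w'" "diff_coords x w' = {a, d}" "w' a = y' a"
    using line_point_in_V line_point_adj assms(1,5) by simp_all
  have "adj y' z'" "adj y' w'" "adj z' w'"
    using star_points_adj[OF y'(1) z'(1) y'_dir z'(3)] star_points_adj[OF y'(1) w'(1) y'_dir w'(3)]
      star_points_adj[OF z'(1) w'(1) z'(3) w'(3)] assms(5) z'(4) w'(4)
    by simp_all
  then show "\<exists>z'\<in>V. \<exists>w'\<in>V. adj x z' \<and> diff_coords x z' = diff_coords x z \<and>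
      adj x w' \<and> diff_coords x w' = diff_coords x w \<and> adj y' z' \<and> adj y' w' \<and> adj z' w'"
    using z'(1-3) w'(1-3) assms(3,4) by (intro bexI[where x = z'] bexI[where x = w']) simp_all
qed

lemma triangle_without_common_coord:
  assumes "adj x y" "adj x z" "adj x w" "adj y z" "adj y w" "adj z w"
    "diff_coords x y \<noteq> diff_coords x z" "diff_coords x y \<noteq> diff_coords x w"
    "diff_coords x z \<noteq> diff_coords x w"
    "diff_coords x y \<inter> diff_coords x z \<inter> diff_coords x w = {}"
  obtains p q r
  where "diff_coords x y = {p, q}" "diff_coords x z = {p, r}" "diff_coords x w = {q, r}"
    "distinct [p, q, r]" "y p = z p" "y q = w q" "z r = w r"
proof -
  obtain p q r where yz: "diff_coords x y = {p, q}" "diff_coords x z = {p, r}"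
    "distinct [p, q, r]" "y p = z p" "diff_coords y z = {q, r}"
    by (rule triangle_star[OF assms(1,2,4,7)])
  obtain p' q' r' where yw: "diff_coords x y = {p', q'}" "diff_coords x w = {p', r'}"
    "distinct [p', q', r']" "y p' = w p'" "diff_coords y w = {q', r'}"
    by (rule triangle_star[OF assms(1,3,5,8)])
  obtain p'' q'' r'' where zw: "diff_coords x z = {p'', q''}" "diff_coords x w = {p'', r''}"
    "distinct [p'', q'', r'']" "z p'' = w p''" "diff_coords z w = {q'', r''}"
    by (rule triangle_star[OF assms(2,3,6,9)])
  have "p' = q" using yz(1,2) yw(1,2) assms(10) by auto
  moreover have "p'' = r" using yz(1,2,3) zw(1,2) assms(10) by auto
  ultimately have "diff_coords x w = {q, r}" using yw(2,3) zw(2,3) yz(3) by auto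
  then show ?thesis using that yz(1-4) yw(4) zw(4) \<open>p' = q\<close> \<open>p'' = r\<close> by blast
qed

lemma triangle_without_common_coord_cong:
  assumes "x \<in> V" "y \<in> V" "z \<in> V" "w \<in> V"
    "diff_coords x y = {p, q}" "diff_coords x z = {p, r}" "diff_coords x w = {q, r}"
    "distinct [p, q, r]" "y p = z p" "y q = w q" "z r = w r"
  shows "[2 * y p = 2 * x p] (mod n)"
proof -
  have "p < m" "q < m" "r < m"
    using assms(5,6) diff_coords_iff by blast+
  then have lines: "[y p + y q = x p + x q] (mod n)" "[z p + z r = x p + x r] (mod n)"
      "[w q + w r = x q + x r] (mod n)"
    using line_sum_mod[OF assms(1,2)] line_sum_mod[OF assms(1,3)] line_sum_mod[OF assms(1,4)]
      assms(5-8) by simp_all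
  have sums: "y p + y q + (z p + z r) = 2 * y p + (w q + w r)"
      "x p + x q + (x p + x r) = 2 * x p + (x q + x r)"
    using assms(9-11) by simp_all
  have "[2 * y p + (w q + w r) = 2 * x p + (x q + x r)] (mod n)"
    using cong_add[OF lines(1,2)] unfolding sums .
  moreover have "[2 * x p + (w q + w r) = 2 * x p + (x q + x r)] (mod n)"
    using cong_add[OF cong_refl lines(3)] .
  ultimately have "[2 * y p + (w q + w r) = 2 * x p + (w q + w r)] (mod n)"
    by (rule cong_trans[OF _ cong_sym])
  then show ?thesis by (simp only: cong_add_rcancel_nat)
qed

lemma not_extends_to_triangles_if_no_common:
  assumes "3 \<le> n" "x \<in> V" "adj x y" "adj x z" "adj x w"
    "diff_coords x y \<noteq> diff_coords x z" "diff_coords x y \<noteq> diff_coords x w"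
    "diff_coords x z \<noteq> diff_coords x w"
    "diff_coords x y \<inter> diff_coords x z \<inter> diff_coords x w = {}"
  shows "\<not> extends_to_triangles x y z w"
proof
  assume ext: "extends_to_triangles x y z w"
  obtain a b where ab: "diff_coords x y = {a, b}" "a \<noteq> b"
    using assms(3) by (rule csr_adj_obtain_pair)
  then have "a < m" "b < m" using diff_coords_iff by blast+
  moreover have "x a < n" using assms(2) \<open>a < m\<close> by (simp add: csr_vertices_def)
  then have "(x a + 1) mod n \<noteq> x a" using add_mod_neq[of 1 n "x a"] assms(1) by simp
  moreover define y' where "y' = line_point x a b ((x a + 1) mod n)"
  ultimately have y': "y' \<in> V" "adj x y'" "diff_coords x y' = {a, b}" "y' a = (x a + 1) mod n"
    using line_point_in_V line_point_adj assms(1,2) ab(2) by simp_all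
  then have "adj x y' \<and> diff_coords x y' = diff_coords x y" using ab(1) by simp
  then have "\<exists>z'\<in>V. \<exists>w'\<in>V. adj x z' \<and> diff_coords x z' = diff_coords x z \<and>
      adj x w' \<and> diff_coords x w' = diff_coords x w \<and> adj y' z' \<and> adj y' w' \<and> adj z' w'"
    using ext y'(1) unfolding extends_to_triangles_def by blast
  then obtain z' w' where zw: "z' \<in> V" "w' \<in> V" "adj x z'" "diff_coords x z' = diff_coords x z"
      "adj x w'" "diff_coords x w' = diff_coords x w" "adj y' z'" "adj y' w'" "adj z' w'"
    by blast
  obtain p q r where pqr: "diff_coords x y' = {p, q}" "diff_coords x z' = {p, r}"
    "diff_coords x w' = {q, r}" "distinct [p, q, r]" "y' p = z' p" "y' q = w' q" "z' r = w' r"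
    by (rule triangle_without_common_coord[OF y'(2) zw(3,5,7,8,9)])
      (use assms(6-9) y'(3) ab(1) zw(4,6) in simp_all)
  have "diff_coords x y' = {q, p}" "distinct [q, p, r]" using pqr(1,4) by auto
  then have "[2 * y' p = 2 * x p] (mod n)" "[2 * y' q = 2 * x q] (mod n)"
    using triangle_without_common_coord_cong[OF assms(2) y'(1) zw(1,2) pqr(1-7)]
      triangle_without_common_coord_cong[OF assms(2) y'(1) zw(2,1) _ pqr(3,2) _ pqr(6,5)
        pqr(7)[symmetric]]
    by simp_all
  then have "[2 * y' a = 2 * x a] (mod n)" using pqr(1) y'(3) by auto
  then have "[2 * x a + 2 = 2 * x a + 0] (mod n)"
    using y'(4) by (simp add: cong_def mod_mult_right_eq algebra_simps)
  then have "n dvd 2" by (simp only: cong_add_lcancel_nat cong_0_iff)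
  then show False using assms(1) by (simp add: nat_dvd_not_less)
qed

lemma extends_to_triangles_iff:
  assumes "3 \<le> n" "x \<in> V" "adj x y" "adj x z" "adj x w"
    "diff_coords x y \<noteq> diff_coords x z" "diff_coords x y \<noteq> diff_coords x w"
    "diff_coords x z \<noteq> diff_coords x w"
  shows "extends_to_triangles x y z w \<longleftrightarrow>
    diff_coords x y \<inter> diff_coords x z \<inter> diff_coords x w \<noteq> {}"
proof
  assume "diff_coords x y \<inter> diff_coords x z \<inter> diff_coords x w \<noteq> {}"
  then obtain a where a: "a \<in> diff_coords x y" "a \<in> diff_coords x z" "a \<in> diff_coords x w"
    by blast
  have "card (diff_coords x y) = 2" "card (diff_coords x z) = 2" "card (diff_coords x w) = 2"
    using assms(3-5) by (simp_all add: csr_adj_iff)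
  then obtain b c d where "diff_coords x y = {a, b}" "b \<noteq> a" "diff_coords x z = {a, c}" "c \<noteq> a"
      "diff_coords x w = {a, d}" "d \<noteq> a"
    using card_2_obtain_other a by metis
  moreover have "distinct [a, b, c, d]" using calculation assms(6-8) by auto
  ultimately show "extends_to_triangles x y z w"
    using extends_to_triangles_if_common[OF assms(2)] by simp
qed (use not_extends_to_triangles_if_no_common[OF assms] in blast)

lemma extends_to_triangles_aut:
  assumes "4 \<le> m" "3 \<le> n" "aut \<psi>" "x \<in> V" "y \<in> V" "z \<in> V" "w \<in> V"
    "adj x y" "adj x z" "adj x w"
  shows "extends_to_triangles (\<psi> x) (\<psi> y) (\<psi> z) (\<psi> w) \<longleftrightarrow> extends_to_triangles x y z w"
proof -
  have "extends_to_triangles (\<psi> x) (\<psi> y) (\<psi> z) (\<psi> w) \<longleftrightarrow>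
    (\<forall>y'\<in>\<psi> ` V. adj (\<psi> x) y' \<and> diff_coords (\<psi> x) y' = diff_coords (\<psi> x) (\<psi> y) \<longrightarrow>
     (\<exists>z'\<in>\<psi> ` V. \<exists>w'\<in>\<psi> ` V. adj (\<psi> x) z' \<and> diff_coords (\<psi> x) z' = diff_coords (\<psi> x) (\<psi> z) \<and>
        adj (\<psi> x) w' \<and> diff_coords (\<psi> x) w' = diff_coords (\<psi> x) (\<psi> w) \<and>
        adj y' z' \<and> adj y' w' \<and> adj z' w'))"
    unfolding extends_to_triangles_def by (simp only: aut_image[OF assms(3)])
  also have "\<dots> \<longleftrightarrow> extends_to_triangles x y z w"
    unfolding extends_to_triangles_def
    using assms by (simp add: aut_adj_iff collinear_aut_iff cong: conj_cong)
  finally show ?thesis .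
qed

lemma common_coord_aut_iff:
  assumes "4 \<le> m" "3 \<le> n" "aut \<psi>" "x \<in> V" "y \<in> V" "z \<in> V" "w \<in> V"
    "adj x y" "adj x z" "adj x w"
    "diff_coords x y \<noteq> diff_coords x z" "diff_coords x y \<noteq> diff_coords x w"
    "diff_coords x z \<noteq> diff_coords x w"
  shows "diff_coords (\<psi> x) (\<psi> y) \<inter> diff_coords (\<psi> x) (\<psi> z) \<inter> diff_coords (\<psi> x) (\<psi> w) = {}
    \<longleftrightarrow> diff_coords x y \<inter> diff_coords x z \<inter> diff_coords x w = {}"
proof -
  have "\<psi> x \<in> V" "adj (\<psi> x) (\<psi> y)" "adj (\<psi> x) (\<psi> z)" "adj (\<psi> x) (\<psi> w)"
    using assms(3-10) by (simp_all add: aut_in_V aut_adj_iff)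
  moreover have "diff_coords (\<psi> x) (\<psi> y) \<noteq> diff_coords (\<psi> x) (\<psi> z)"
      "diff_coords (\<psi> x) (\<psi> y) \<noteq> diff_coords (\<psi> x) (\<psi> w)"
      "diff_coords (\<psi> x) (\<psi> z) \<noteq> diff_coords (\<psi> x) (\<psi> w)"
    using assms by (simp_all add: collinear_aut_iff)
  ultimately show ?thesis
    using extends_to_triangles_iff[OF assms(2)] extends_to_triangles_iff[OF assms(2,4,8-13)]
      extends_to_triangles_aut[OF assms(1-10)]
    by simp
qed

section \<open>The induced permutation of coordinates\<close>

lemma aut_directions_Int_unique:
  assumes "4 \<le> m" "3 \<le> n" "aut \<psi>" "x \<in> V" "y \<in> V" "z \<in> V" "adj x y" "adj x z"
    "diff_coords x y \<noteq> diff_coords x z"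
    "c \<in> diff_coords (\<psi> x) (\<psi> y)" "c \<in> diff_coords (\<psi> x) (\<psi> z)"
    "c' \<in> diff_coords (\<psi> x) (\<psi> y)" "c' \<in> diff_coords (\<psi> x) (\<psi> z)"
  shows "c = c'"
proof (rule card_2_Int_unique[OF _ _ _ IntI[OF assms(10,11)] IntI[OF assms(12,13)]])
  show "card (diff_coords (\<psi> x) (\<psi> y)) = 2" "card (diff_coords (\<psi> x) (\<psi> z)) = 2"
    using assms(3-8) by (simp_all add: aut_adj_iff flip: csr_adj_iff)
  show "diff_coords (\<psi> x) (\<psi> y) \<noteq> diff_coords (\<psi> x) (\<psi> z)"
    using collinear_aut_iff[OF assms(1-8)] assms(9) by simp
qed

lemma aut_common_coord:
  assumes "4 \<le> m" "3 \<le> n" "aut \<psi>" "x \<in> V" "y \<in> V" "z \<in> V" "w \<in> V"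
    "adj x y" "adj x z" "adj x w"
    "diff_coords x y \<noteq> diff_coords x z" "diff_coords x y \<noteq> diff_coords x w"
    "diff_coords x z \<noteq> diff_coords x w"
    "i \<in> diff_coords x y" "i \<in> diff_coords x z" "i \<in> diff_coords x w"
  obtains c where "c \<in> diff_coords (\<psi> x) (\<psi> y)" "c \<in> diff_coords (\<psi> x) (\<psi> z)"
    "c \<in> diff_coords (\<psi> x) (\<psi> w)"
proof -
  have "diff_coords x y \<inter> diff_coords x z \<inter> diff_coords x w \<noteq> {}"
    using assms(14-16) by blast
  then have "diff_coords (\<psi> x) (\<psi> y) \<inter> diff_coords (\<psi> x) (\<psi> z) \<inter> diff_coords (\<psi> x) (\<psi> w) \<noteq> {}"
    using common_coord_aut_iff[OF assms(1-13)] by simp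
  then show ?thesis using that by blast
qed

lemma aut_star_coord:
  assumes "4 \<le> m" "3 \<le> n" "aut \<psi>" "x \<in> V" "y0 \<in> V" "z0 \<in> V" "adj x y0" "adj x z0"
    "diff_coords x y0 \<noteq> diff_coords x z0" "i \<in> diff_coords x y0" "i \<in> diff_coords x z0"
    "c \<in> diff_coords (\<psi> x) (\<psi> y0)" "c \<in> diff_coords (\<psi> x) (\<psi> z0)"
    "y \<in> V" "adj x y" "i \<in> diff_coords x y"
  shows "c \<in> diff_coords (\<psi> x) (\<psi> y)"
proof -
  consider "diff_coords x y = diff_coords x y0" | "diff_coords x y = diff_coords x z0"
    | "diff_coords x y \<noteq> diff_coords x y0" "diff_coords x y \<noteq> diff_coords x z0"
    by blast
  then show ?thesis
  proof cases
    case 1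
    then show ?thesis using collinear_aut_iff[OF assms(1-4,14,5,15,7)] assms(12) by simp
  next
    case 2
    then show ?thesis using collinear_aut_iff[OF assms(1-4,14,6,15,8)] assms(13) by simp
  next
    case 3
    obtain c' where "c' \<in> diff_coords (\<psi> x) (\<psi> y)" "c' \<in> diff_coords (\<psi> x) (\<psi> y0)"
        "c' \<in> diff_coords (\<psi> x) (\<psi> z0)"
      by (rule aut_common_coord[OF assms(1-4,14,5,6,15,7,8) 3 assms(9,16,10,11)])
    moreover have "c' = c"
      using aut_directions_Int_unique[of \<psi> x y0 z0 c' c,
          OF assms(1-9) calculation(2,3) assms(12,13)] .
    ultimately show ?thesis by simp
  qed
qed

text \<open>\<open>coord_map \<psi> x\<close> is the permutation \<open>\<sigma>\<close> of the theorem, read off at the vertex \<open>x\<close>.\<close>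

definition maps_coord :: "((nat \<Rightarrow> nat) \<Rightarrow> nat \<Rightarrow> nat) \<Rightarrow> (nat \<Rightarrow> nat) \<Rightarrow> nat \<Rightarrow> nat \<Rightarrow> bool" where
  "maps_coord \<psi> x i c \<longleftrightarrow>
     c < m \<and> (\<forall>y\<in>V. adj x y \<and> i \<in> diff_coords x y \<longrightarrow> c \<in> diff_coords (\<psi> x) (\<psi> y))"

definition coord_map :: "((nat \<Rightarrow> nat) \<Rightarrow> nat \<Rightarrow> nat) \<Rightarrow> (nat \<Rightarrow> nat) \<Rightarrow> nat \<Rightarrow> nat" where
  "coord_map \<psi> x i = (THE c. maps_coord \<psi> x i c)"

lemma maps_coord_ex1:
  assumes "4 \<le> m" "3 \<le> n" "aut \<psi>" "x \<in> V" "i < m"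
  shows "\<exists>!c. maps_coord \<psi> x i c"
proof -
  have "1 < n" using assms(2) by simp
  obtain j where j: "j < m" "j \<notin> set [i]"
    using exists_less_notin_set[of "[i]" m] assms(1) by auto
  obtain k where k: "k < m" "k \<notin> set [i, j]"
    using exists_less_notin_set[of "[i, j]" m] assms(1) by auto
  obtain l where l: "l < m" "l \<notin> set [i, j, k]"
    using exists_less_notin_set[of "[i, j, k]" m] assms(1) by auto
  obtain y0 where y0: "y0 \<in> V" "adj x y0" "diff_coords x y0 = {i, j}"
    by (rule exists_adj_direction[OF \<open>1 < n\<close> assms(4) \<open>i < m\<close> \<open>j < m\<close>]) (use j(2) in simp)
  obtain z0 where z0: "z0 \<in> V" "adj x z0" "diff_coords x z0 = {i, k}"
    by (rule exists_adj_direction[OF \<open>1 < n\<close> assms(4) \<open>i < m\<close> \<open>k < m\<close>]) (use k(2) in simp)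
  obtain w0 where w0: "w0 \<in> V" "adj x w0" "diff_coords x w0 = {i, l}"
    by (rule exists_adj_direction[OF \<open>1 < n\<close> assms(4) \<open>i < m\<close> \<open>l < m\<close>]) (use l(2) in simp)
  have dirs: "diff_coords x y0 \<noteq> diff_coords x z0" "diff_coords x y0 \<noteq> diff_coords x w0"
      "diff_coords x z0 \<noteq> diff_coords x w0"
    using y0(3) z0(3) w0(3) j(2) k(2) l(2) by (auto simp: doubleton_eq_iff)
  have i: "i \<in> diff_coords x y0" "i \<in> diff_coords x z0" "i \<in> diff_coords x w0"
    using y0(3) z0(3) w0(3) by simp_all
  obtain c where c: "c \<in> diff_coords (\<psi> x) (\<psi> y0)" "c \<in> diff_coords (\<psi> x) (\<psi> z0)"
    "c \<in> diff_coords (\<psi> x) (\<psi> w0)"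
    by (rule aut_common_coord[OF assms(1-4) y0(1) z0(1) w0(1) y0(2) z0(2) w0(2) dirs i])
  have "c < m" using c(1) diff_coords_iff by blast
  then have "maps_coord \<psi> x i c"
    using aut_star_coord[where \<psi> = \<psi>, OF assms(1-4) y0(1) z0(1) y0(2) z0(2) dirs(1) i(1,2) c(1,2)]
    by (simp add: maps_coord_def)
  moreover have "c' = c" if "maps_coord \<psi> x i c'" for c'
  proof -
    have "c' \<in> diff_coords (\<psi> x) (\<psi> y0)" "c' \<in> diff_coords (\<psi> x) (\<psi> z0)"
      using that y0(1,2) z0(1,2) i(1,2) unfolding maps_coord_def by blast+
    then show ?thesis
      using aut_directions_Int_unique[of \<psi> x y0 z0 c' c,
          OF assms(1-4) y0(1) z0(1) y0(2) z0(2) dirs(1)]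
        c(1,2) by blast
  qed
  ultimately show ?thesis by (rule ex1I)
qed

lemma maps_coord_coord_map:
  assumes "4 \<le> m" "3 \<le> n" "aut \<psi>" "x \<in> V" "i < m"
  shows "maps_coord \<psi> x i (coord_map \<psi> x i)"
  unfolding coord_map_def by (rule theI'[OF maps_coord_ex1[OF assms]])

lemma coord_map_less:
  assumes "4 \<le> m" "3 \<le> n" "aut \<psi>" "x \<in> V" "i < m"
  shows "coord_map \<psi> x i < m"
  using maps_coord_coord_map[OF assms] by (simp add: maps_coord_def)

lemma coord_map_in_diff_coords:
  assumes "4 \<le> m" "3 \<le> n" "aut \<psi>" "x \<in> V" "y \<in> V" "adj x y" "i \<in> diff_coords x y"
  shows "coord_map \<psi> x i \<in> diff_coords (\<psi> x) (\<psi> y)"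
proof -
  have "i < m" using assms(7) diff_coords_iff by blast
  then show ?thesis
    using maps_coord_coord_map[OF assms(1-4)] assms(5-7) by (simp add: maps_coord_def)
qed

lemma inj_on_coord_map:
  assumes "4 \<le> m" "3 \<le> n" "aut \<psi>" "x \<in> V"
  shows "inj_on (coord_map \<psi> x) {..<m}"
proof (rule inj_onI, rule ccontr)
  fix i j assume ij: "i \<in> {..<m}" "j \<in> {..<m}" "coord_map \<psi> x i = coord_map \<psi> x j" "i \<noteq> j"
  have "1 < n" "i < m" "j < m" using assms(2) ij(1,2) by simp_all
  obtain k where k: "k < m" "k \<notin> set [i, j]"
    using exists_less_notin_set[of "[i, j]" m] assms(1) by auto
  obtain y1 where y1: "y1 \<in> V" "adj x y1" "diff_coords x y1 = {i, j}"
    by (rule exists_adj_direction[OF \<open>1 < n\<close> assms(4) \<open>i < m\<close> \<open>j < m\<close>]) (use ij(4) in simp)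
  obtain y2 where y2: "y2 \<in> V" "adj x y2" "diff_coords x y2 = {i, k}"
    by (rule exists_adj_direction[OF \<open>1 < n\<close> assms(4) \<open>i < m\<close> \<open>k < m\<close>]) (use k(2) in simp)
  obtain y3 where y3: "y3 \<in> V" "adj x y3" "diff_coords x y3 = {j, k}"
    by (rule exists_adj_direction[OF \<open>1 < n\<close> assms(4) \<open>j < m\<close> \<open>k < m\<close>]) (use k(2) in simp)
  have dirs: "diff_coords x y1 \<noteq> diff_coords x y2" "diff_coords x y1 \<noteq> diff_coords x y3"
      "diff_coords x y2 \<noteq> diff_coords x y3"
    using y1(3) y2(3) y3(3) ij(4) k(2) by (auto simp: doubleton_eq_iff)
  have "coord_map \<psi> x i \<in> diff_coords (\<psi> x) (\<psi> y1)" "coord_map \<psi> x i \<in> diff_coords (\<psi> x) (\<psi> y2)"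
      "coord_map \<psi> x j \<in> diff_coords (\<psi> x) (\<psi> y3)"
    using coord_map_in_diff_coords[OF assms] y1 y2 y3 by simp_all
  then have "coord_map \<psi> x i \<in>
      diff_coords (\<psi> x) (\<psi> y1) \<inter> diff_coords (\<psi> x) (\<psi> y2) \<inter> diff_coords (\<psi> x) (\<psi> y3)"
    using ij(3) by simp
  then have "diff_coords (\<psi> x) (\<psi> y1) \<inter> diff_coords (\<psi> x) (\<psi> y2) \<inter> diff_coords (\<psi> x) (\<psi> y3) \<noteq> {}"
    by blast
  moreover have "diff_coords x y1 \<inter> diff_coords x y2 \<inter> diff_coords x y3 = {}"
    using y1(3) y2(3) y3(3) ij(4) k(2) by auto
  ultimately show False
    using common_coord_aut_iff[OF assms y1(1) y2(1) y3(1) y1(2) y2(2) y3(2) dirs] by simp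
qed

lemma diff_coords_aut:
  assumes "4 \<le> m" "3 \<le> n" "aut \<psi>" "x \<in> V" "y \<in> V" "adj x y"
  shows "diff_coords (\<psi> x) (\<psi> y) = coord_map \<psi> x ` diff_coords x y"
proof -
  obtain i j where ij: "diff_coords x y = {i, j}" "i \<noteq> j"
    using assms(6) by (rule csr_adj_obtain_pair)
  then have "i < m" "j < m" using diff_coords_iff by blast+
  then have "coord_map \<psi> x i \<noteq> coord_map \<psi> x j"
    using inj_on_coord_map[OF assms(1-4)] ij(2) by (auto dest: inj_onD)
  moreover have "{coord_map \<psi> x i, coord_map \<psi> x j} \<subseteq> diff_coords (\<psi> x) (\<psi> y)"
    using coord_map_in_diff_coords[OF assms] ij(1) by simp
  moreover have "card (diff_coords (\<psi> x) (\<psi> y)) = 2"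
    using assms(3-6) by (simp add: aut_adj_iff flip: csr_adj_iff)
  ultimately have "{coord_map \<psi> x i, coord_map \<psi> x j} = diff_coords (\<psi> x) (\<psi> y)"
    by (intro card_subset_eq) simp_all
  then show ?thesis using ij(1) by simp
qed

lemma coord_map_adj_pair:
  assumes "4 \<le> m" "3 \<le> n" "aut \<psi>" "x \<in> V" "y \<in> V" "adj x y"
    "diff_coords x y = {a, b}" "a \<noteq> b" "c < m" "c \<notin> {a, b}"
  shows "{coord_map \<psi> y b, coord_map \<psi> y c} = {coord_map \<psi> x b, coord_map \<psi> x c}"
proof -
  let ?X = "coord_map \<psi> x" and ?Y = "coord_map \<psi> y"
  have "a \<in> diff_coords x y" using assms(7) by simp
  then have "a < m" "y a \<noteq> x a" by (simp_all add: diff_coords_iff)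
  moreover have "y a < n" using assms(5) \<open>a < m\<close> by (simp add: csr_vertices_def)
  moreover define z where "z = line_point x a c (y a)"
  ultimately have z: "z \<in> V" "adj x z" "diff_coords x z = {a, c}" "z a = y a"
    using line_point_in_V line_point_adj assms(4,9,10) by auto
  have "distinct [a, b, c]" using assms(8,10) by simp
  then have "adj y z" using star_points_adj[OF assms(5) z(1) assms(7) z(3)] z(4) by simp
  have "diff_coords x y \<noteq> diff_coords x z"
    using assms(7) z(3) \<open>distinct [a, b, c]\<close> by (auto simp: doubleton_eq_iff)
  then have "diff_coords y z = {b, c}"
    using triangle_diff_coords[OF assms(6) z(2) \<open>adj y z\<close>] assms(7) z(3) \<open>distinct [a, b, c]\<close>
    by auto
  then have "diff_coords (\<psi> y) (\<psi> z) = {?Y b, ?Y c}"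
    using diff_coords_aut[OF assms(1-3,5) z(1) \<open>adj y z\<close>] by simp
  moreover have "?X a \<noteq> ?X b" "?X a \<noteq> ?X c" "?X b \<noteq> ?X c"
    using inj_on_coord_map[OF assms(1-4)] \<open>distinct [a, b, c]\<close> \<open>a < m\<close> assms(7,9)
      diff_coords_iff[of b x y] by (auto dest: inj_onD)
  moreover have "diff_coords (\<psi> x) (\<psi> y) = {?X a, ?X b}" "diff_coords (\<psi> x) (\<psi> z) = {?X a, ?X c}"
    using diff_coords_aut[OF assms(1-6)] diff_coords_aut[OF assms(1-4) z(1,2)] assms(7) z(3)
    by simp_all
  moreover have "adj (\<psi> x) (\<psi> y)" "adj (\<psi> x) (\<psi> z)" "adj (\<psi> y) (\<psi> z)"
    using assms(3-6) z(1,2) \<open>adj y z\<close> by (simp_all add: aut_adj_iff)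
  ultimately show ?thesis
    using triangle_diff_coords[of "\<psi> x" "\<psi> y" "\<psi> z"] by (auto simp: doubleton_eq_iff)
qed

lemma coord_map_adj_eq:
  assumes "4 \<le> m" "3 \<le> n" "aut \<psi>" "x \<in> V" "y \<in> V" "adj x y" "i < m"
  shows "coord_map \<psi> y i = coord_map \<psi> x i"
proof -
  let ?X = "coord_map \<psi> x" and ?Y = "coord_map \<psi> y"
  obtain a b where ab: "diff_coords x y = {a, b}" "a \<noteq> b"
    using assms(6) by (rule csr_adj_obtain_pair)
  then have "a < m" "b < m" using diff_coords_iff by blast+
  have inj: "inj_on ?X {..<m}" "inj_on ?Y {..<m}"
    using inj_on_coord_map[OF assms(1-3)] assms(4,5) by simp_all
  have outside: "?Y c = ?X c" if "c < m" "c \<notin> {a, b}" for c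
  proof -
    have ba: "diff_coords x y = {b, a}" "b \<noteq> a" "c \<notin> {b, a}" using ab that(2) by auto
    have "?Y c \<in> {?X b, ?X c}" "?Y c \<in> {?X a, ?X c}"
      using coord_map_adj_pair[OF assms(1-6) ab that]
        coord_map_adj_pair[OF assms(1-6) ba(1,2) that(1) ba(3)]
      by blast+
    moreover have "?X a \<noteq> ?X b" using inj(1) ab(2) \<open>a < m\<close> \<open>b < m\<close> by (auto dest: inj_onD)
    ultimately show ?thesis by auto
  qed
  show ?thesis
  proof (cases "i \<in> {a, b}")
    case False
    then show ?thesis using outside assms(7) by simp
  next
    case True
    obtain c where c: "c < m" "c \<notin> set [a, b]"
      using exists_less_notin_set[of "[a, b]" m] assms(1) by auto
    obtain j where j: "diff_coords x y = {j, i}" "j \<noteq> i" using True ab by auto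
    then have "c \<notin> {j, i}" using c(2) ab(1) by auto
    then have "{?Y i, ?Y c} = {?X i, ?X c}"
      using coord_map_adj_pair[OF assms(1-6) j c(1)] by simp
    moreover have "?Y i \<noteq> ?Y c" using inj(2) c assms(7) True by (auto dest: inj_onD)
    ultimately show ?thesis using outside[OF c(1)] c(2) by (auto simp: doubleton_eq_iff)
  qed
qed

lemma coord_map_eq:
  assumes "4 \<le> m" "3 \<le> n" "aut \<psi>" "x \<in> V" "y \<in> V" "i < m"
  shows "coord_map \<psi> y i = coord_map \<psi> x i"
  using csr_vertex_path_induct[OF assms(4,5), where P = "\<lambda>u. coord_map \<psi> u i = coord_map \<psi> x i"]
    coord_map_adj_eq[OF assms(1-3) _ _ _ assms(6)] by simp

lemma bij_betw_coord_map:
  assumes "4 \<le> m" "3 \<le> n" "aut \<psi>" "x \<in> V"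
  shows "bij_betw (coord_map \<psi> x) {..<m} {..<m}"
proof -
  have "coord_map \<psi> x ` {..<m} \<subseteq> {..<m}" using coord_map_less[OF assms] by auto
  then show ?thesis
    using endo_inj_surj[OF finite_lessThan _ inj_on_coord_map[OF assms]] inj_on_coord_map[OF assms]
    by (simp add: bij_betw_def)
qed

lemma aut_apply_coord_map_cong:
  assumes "4 \<le> m" "3 \<le> n" "aut \<psi>" "z \<in> V" "x \<in> V" "y \<in> V" "i < m" "x i = y i"
  shows "\<psi> y (coord_map \<psi> z i) = \<psi> x (coord_map \<psi> z i)"
proof (rule csr_vertex_path_induct[OF assms(5,6),
      where P = "\<lambda>u. \<psi> u (coord_map \<psi> z i) = \<psi> x (coord_map \<psi> z i)"])
  fix u v assume uv: "u \<in> V" "v \<in> V" "adj u v" "diff_coords u v \<subseteq> diff_coords x y"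
    and "\<psi> u (coord_map \<psi> z i) = \<psi> x (coord_map \<psi> z i)"
  have "i \<notin> diff_coords u v" using uv(4) assms(8) by (auto simp: diff_coords_iff)
  have "diff_coords (\<psi> u) (\<psi> v) = coord_map \<psi> u ` diff_coords u v"
    by (rule diff_coords_aut[OF assms(1-3) uv(1-3)])
  also have "\<dots> = coord_map \<psi> z ` diff_coords u v"
    using coord_map_eq[OF assms(1-4) uv(1)] by (auto simp: diff_coords_iff)
  finally have "coord_map \<psi> z i \<notin> diff_coords (\<psi> u) (\<psi> v)"
    using inj_on_coord_map[OF assms(1-4)] assms(7) \<open>i \<notin> diff_coords u v\<close>
    by (auto simp: diff_coords_iff dest: inj_onD)
  then show "\<psi> v (coord_map \<psi> z i) = \<psi> x (coord_map \<psi> z i)"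
    using coord_map_less[OF assms(1-4,7)] \<open>\<psi> u (coord_map \<psi> z i) = \<psi> x (coord_map \<psi> z i)\<close>
    by (simp add: diff_coords_iff)
qed simp

lemma bij_betw_coordinate_factor:
  assumes "aut \<psi>" "2 \<le> m" "i < m" "j < m" and factor: "\<And>x. x \<in> V \<Longrightarrow> \<psi> x j = f (x i)"
  shows "bij_betw f {..<n} {..<n}"
proof -
  have "f ` {..<n} \<subseteq> {..<n}"
  proof
    fix w assume "w \<in> f ` {..<n}"
    then obtain v where v: "v < n" "w = f v" by blast
    obtain x where x: "x \<in> V" "x i = v" using exists_vertex_with_coord[OF assms(2,3) v(1)] .
    have "\<psi> x \<in> V" using aut_in_V[OF assms(1) x(1)] .
    then have "\<psi> x j < n" using assms(4) by (simp add: csr_vertices_def)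
    then show "w \<in> {..<n}" using factor[OF x(1)] x(2) v(2) by simp
  qed
  moreover have "{..<n} \<subseteq> f ` {..<n}"
  proof
    fix w assume "w \<in> {..<n}"
    then obtain y where y: "y \<in> V" "y j = w" using exists_vertex_with_coord[OF assms(2,4)] by blast
    then have "y \<in> \<psi> ` V" using aut_image[OF assms(1)] by simp
    then obtain x where x: "x \<in> V" "y = \<psi> x" by blast
    then have "x i < n" using assms(3) by (simp add: csr_vertices_def)
    moreover have "w = f (x i)" using factor[OF x(1)] x(2) y(2) by simp
    ultimately show "w \<in> f ` {..<n}" by simp
  qed
  ultimately show ?thesis
    using finite_surj_inj[OF finite_lessThan] by (simp add: bij_betw_def subset_antisym)
qed

end

theorem lemma6:
  fixes m n :: nat and \<psi> :: "(nat \<Rightarrow> nat) \<Rightarrow> (nat \<Rightarrow> nat)"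
  assumes "m > 3" and "n > 3" and "csr_automorphism m n \<psi>"
  shows "\<exists>(\<psi>s :: nat \<Rightarrow> nat \<Rightarrow> nat) (\<sigma> :: nat \<Rightarrow> nat).
           (\<forall>i<m. bij_betw (\<psi>s i) {..<n} {..<n}) \<and>
           bij_betw \<sigma> {..<m} {..<m} \<and>
           (\<forall>x\<in>csr_vertices m n. \<forall>i<m. \<psi> x (\<sigma> i) = \<psi>s i (x i))"
proof -
  interpret csr m n .
  have m: "4 \<le> m" "2 \<le> m" and n: "3 \<le> n" using assms(1,2) by simp_all
  obtain x0 where "x0 \<in> V" using exists_vertex_with_coord[OF m(2), of 0 0] m n by auto
  define \<sigma> where "\<sigma> = coord_map \<psi> x0"
  define \<psi>s where "\<psi>s i v = \<psi> (SOME x. x \<in> V \<and> x i = v) (\<sigma> i)" for i v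
  have factor: "\<psi> x (\<sigma> i) = \<psi>s i (x i)" if "x \<in> V" "i < m" for x i
  proof -
    have "x i < n" using that by (simp add: csr_vertices_def)
    then have "\<exists>y. y \<in> V \<and> y i = x i" using exists_vertex_with_coord[OF m(2) that(2)] by metis
    then have "(SOME y. y \<in> V \<and> y i = x i) \<in> V \<and> (SOME y. y \<in> V \<and> y i = x i) i = x i"
      by (rule someI_ex)
    then show ?thesis
      unfolding \<psi>s_def \<sigma>_def
      using aut_apply_coord_map_cong[OF m(1) n assms(3) \<open>x0 \<in> V\<close> that(1) _ that(2)] by simp
  qed
  have "bij_betw (\<psi>s i) {..<n} {..<n}" if "i < m" for i
    using bij_betw_coordinate_factor[OF assms(3) m(2) that]
      coord_map_less[OF m(1) n assms(3) \<open>x0 \<in> V\<close> that]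
      factor that unfolding \<sigma>_def by blast
  then show ?thesis
    using bij_betw_coord_map[OF m(1) n assms(3) \<open>x0 \<in> V\<close>] factor unfolding \<sigma>_def by blast
qed

end
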